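(* Let $P=\{p_1,\dots,p_n\}\subset\mathbb{R}^2$ be in general position, $n\ge 3$. (a) The expansion cone $\bar X_0(P)$ is a pointed polyhedral cone (the origin is a vertex) of full dimension $2n-3$ in the subspace of normalized motions. (b) Let $v\in\bar X_0(P)$ and let $E(v)=\{ij:\langle p_i-p_j,v_i-v_j\rangle=0\}$. If $E(v)$ contains (i) two crossing edges, or (ii) a set of edges incident to a common vertex $p$ such that no angle at $p$ between consecutive edges of this set exceeds $\pi$, or (iii) all edges of the boundary of a convex polygon whose vertices are points of $P$, then $E(v)$ contains all edges of the complete graph on the endpoints of the involved edges; in case (iii) this complete graph also includes all points of $P$ lying inside the convex polygon.
   Context: General position: no three points collinear. Infinitesimal motions $v=(v_1,\dots,v_n)\in(\mathbb{R}^2)^n$ are normalized by $v_1^1=v_1^2=v_2^1=0$ (superscripts are coordinates; $p_1,p_2$ have different $y$-coordinates). The expansion cone $\bar X_0(P)$ is the set of normalized $v$ with $\langle p_i-p_j,v_i-v_j\rangle\ge0$ for all $i<j$ (expansive motions). *)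

theory Defs
  imports "HOL-Analysis.Analysis"
begin

text \<open>Point configurations are indexed by a finite type 'n (so n = CARD('n));
  a configuration is p :: real^2^'n (point i is p$i), an infinitesimal motion is
  v :: real^2^'n (velocity of point i is v$i). Coordinate 1 is x, coordinate 2 is y.\<close>

definition general_position :: "real^2^'n \<Rightarrow> bool" where
  "general_position p \<longleftrightarrow> inj (\<lambda>i. p$i) \<and>
     (\<forall>i j k. distinct [i,j,k] \<longrightarrow> \<not> collinear {p$i, p$j, p$k})"

definition normalized :: "'n \<Rightarrow> 'n \<Rightarrow> real^2^'n \<Rightarrow> bool" where
  "normalized i1 i2 v \<longleftrightarrow> (v$i1)$1 = 0 \<and> (v$i1)$2 = 0 \<and> (v$i2)$1 = 0"

definition expansion_cone :: "real^2^'n \<Rightarrow> 'n \<Rightarrow> 'n \<Rightarrow> (real^2^'n) set" where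
  "expansion_cone p i1 i2 =
     {v. normalized i1 i2 v \<and> (\<forall>i j. i \<noteq> j \<longrightarrow> (p$i - p$j) \<bullet> (v$i - v$j) \<ge> 0)}"

definition tight_edges :: "real^2^'n \<Rightarrow> real^2^'n \<Rightarrow> 'n set set" where
  "tight_edges p v = {{i,j} | i j. i \<noteq> j \<and> (p$i - p$j) \<bullet> (v$i - v$j) = 0}"

definition complete_edges :: "'n set \<Rightarrow> 'n set set" where
  "complete_edges S = {{i,j} | i j. i \<in> S \<and> j \<in> S \<and> i \<noteq> j}"

definition cross2 :: "real^2 \<Rightarrow> real^2 \<Rightarrow> real" where
  "cross2 a b = a$1 * b$2 - a$2 * b$1"

text \<open>The edges from vertex k to the vertices in J are such that no angle at p_k between
  (counterclockwise) consecutive edges exceeds pi: J is nonempty, and for every edge kj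
  there is an edge kj' reached from it by a counterclockwise rotation by an angle in (0, pi]
  (angle in (0,pi): positive cross product; angle exactly pi: opposite direction).\<close>
definition consecutive_angles_le_pi :: "real^2^'n \<Rightarrow> 'n \<Rightarrow> 'n set \<Rightarrow> bool" where
  "consecutive_angles_le_pi p k J \<longleftrightarrow> J \<noteq> {} \<and> k \<notin> J \<and>
     (\<forall>j\<in>J. \<exists>j'\<in>J. cross2 (p$j - p$k) (p$j' - p$k) > 0 \<or>
        (cross2 (p$j - p$k) (p$j' - p$k) = 0 \<and> (p$j - p$k) \<bullet> (p$j' - p$k) < 0))"

text \<open>Q is the vertex set of a convex polygon with vertices in P (at least 3 vertices, each an
  extreme point of the convex hull); its boundary edges are the pairs whose segment lies on the
  boundary of the polygon.\<close>
definition convex_polygon :: "real^2^'n \<Rightarrow> 'n set \<Rightarrow> bool" where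
  "convex_polygon p Q \<longleftrightarrow> card Q \<ge> 3 \<and>
     (\<forall>q\<in>Q. (p$q) extreme_point_of (convex hull ((\<lambda>i. p$i) ` Q)))"

definition polygon_boundary_edges :: "real^2^'n \<Rightarrow> 'n set \<Rightarrow> 'n set set" where
  "polygon_boundary_edges p Q = {{i,j} | i j. i \<in> Q \<and> j \<in> Q \<and> i \<noteq> j \<and>
     closed_segment (p$i) (p$j) \<subseteq> frontier (convex hull ((\<lambda>i. p$i) ` Q))}"

end

theory Submission
  imports Defs
begin

text \<open>
  Write \<open>strain(i,j) = \<langle>p\<^sub>i - p\<^sub>j, v\<^sub>i - v\<^sub>j\<rangle>\<close>.

  (a) Inside the space of normalized motions the expansion cone is cut out by the finitely many
  linear inequalities \<open>strain(i,j) \<ge> 0\<close>. A normalized motion all of whose strains vanish is zero,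
  since every point is pinned to \<open>p\<^sub>i\<^sub>1\<close> and \<open>p\<^sub>i\<^sub>2\<close> by two non-parallel tight edges; hence 0 is a
  vertex. The dilation \<open>v\<^sub>k = p\<^sub>k - p\<^sub>i\<^sub>1\<close>, corrected by a rotation so that it is normalized, has
  all strains positive, so the cone spans the \<open>(2n - 3)\<close>-dimensional space of normalized motions.

  (b) For an affine dependence (\<open>\<Sum> l\<^sub>i = 0\<close>, \<open>\<Sum> l\<^sub>i p\<^sub>i = 0\<close>) one has
  \<open>\<Sum> l\<^sub>i l\<^sub>j strain(i,j) = 0\<close>, summed over all pairs. Two crossing edges give a dependence of
  their endpoints that is positive on one edge and negative on the other; a star whose consecutive angles are at most \<open>\<pi>\<close>
  gives one (by Stiemke's lemma) that is negative at the centre and positive at the leaves. In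
  both cases \<open>l\<^sub>i l\<^sub>j\<close> has constant sign on the pairs not yet known to be tight, so all strains
  vanish. For a convex polygon with tight boundary, the angular velocity of the boundary edges
  cannot increase when passing a vertex, because the diagonal cutting off that vertex expands;
  as these changes sum to zero around the polygon, all those diagonals are tight, and removing a
  vertex gives an induction on the number of vertices. A point inside the rigidly moving polygon
  has non-negative strains to its vertices that average to zero, so it moves with the polygon.
\<close>

section \<open>Planar vectors\<close>

lemma inner_vec2: "x \<bullet> y = x$1 * y$1 + x$2 * y$2" for x y :: "real^2"
  by (simp add: inner_vec_def sum_2)

lemma vec2_eq_iff: "x = y \<longleftrightarrow> x$1 = y$1 \<and> x$2 = y$2" for x y :: "real^2"
  by (simp add: vec_eq_iff forall_2)

lemma cross2_commute: "cross2 x y = - cross2 y x"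
  by (simp add: cross2_def)

lemma cross2_self [simp]: "cross2 x x = 0"
  by (simp add: cross2_def)

lemma cross2_diff_swap: "cross2 (a - b) (x - b) = - cross2 (b - a) (x - a)"
  by (simp add: cross2_def algebra_simps)

definition rot90 :: "real^2 \<Rightarrow> real^2" where
  "rot90 d = vector [- d$2, d$1]"

lemma rot90_nth [simp]: "rot90 d $ 1 = - d$2" "rot90 d $ 2 = d$1"
  by (simp_all add: rot90_def)

lemma rot90_zero [simp]: "rot90 0 = 0"
  by (simp add: vec2_eq_iff)

lemma rot90_diff: "rot90 (x - y) = rot90 x - rot90 y"
  by (simp add: vec2_eq_iff)

lemma inner_rot90_self [simp]: "d \<bullet> rot90 d = 0" "rot90 d \<bullet> d = 0"
  by (simp_all add: inner_vec2)

lemma cross2_eq_inner_rot90: "cross2 d y = rot90 d \<bullet> y"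
  by (simp add: cross2_def inner_vec2)

lemma orthogonal_to_independent_eq_0:
  fixes a b w :: "real^2"
  assumes "a \<bullet> w = 0" "b \<bullet> w = 0" "cross2 a b \<noteq> 0"
  shows "w = 0"
proof -
  have "w$1 * cross2 a b = 0" "w$2 * cross2 a b = 0"
    using assms(1,2) unfolding inner_vec2 cross2_def by algebra+
  then show ?thesis using assms(3) by (simp add: vec2_eq_iff)
qed

lemma cross2_eq_0_if_orthogonal:
  fixes a x y :: "real^2"
  assumes "a \<noteq> 0" "a \<bullet> x = 0" "a \<bullet> y = 0"
  shows "cross2 x y = 0"
  using orthogonal_to_independent_eq_0[of x a y] assms by (auto simp: inner_commute)

lemma orthogonal_eq_scaleR_rot90:
  fixes d e :: "real^2"
  assumes "d \<bullet> e = 0" "d \<noteq> 0"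
  shows "e = (cross2 d e / (d \<bullet> d)) *\<^sub>R rot90 d"
proof -
  have "d \<bullet> d \<noteq> 0" using assms(2) by simp
  moreover have "e$1 * (d \<bullet> d) = cross2 d e * (- d$2)" "e$2 * (d \<bullet> d) = cross2 d e * d$1"
    using assms(1) unfolding inner_vec2 cross2_def by algebra+
  ultimately show ?thesis by (simp add: vec2_eq_iff field_simps)
qed

lemma collinear_if_cross2_eq_0:
  fixes a b c :: "real^2"
  assumes "cross2 (b - a) (c - a) = 0"
  shows "collinear {a, b, c}"
proof (cases "b = a")
  case True then show ?thesis by (simp add: collinear_2)
next
  case False
  define d where "d = b - a"
  define t where "t = (d \<bullet> (c - a)) / (d \<bullet> d)"
  have "d \<bullet> d \<noteq> 0" using False by (simp add: d_def)
  moreover have "(c - a)$1 * (d \<bullet> d) = (d \<bullet> (c - a)) * d$1"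
      "(c - a)$2 * (d \<bullet> d) = (d \<bullet> (c - a)) * d$2"
    using assms unfolding d_def inner_vec2 cross2_def by algebra+
  ultimately have "c - a = t *\<^sub>R d"
    unfolding vec2_eq_iff t_def by (simp add: field_simps)
  then have "collinear {0, b - a, c - a}" by (auto simp: collinear_lemma d_def)
  moreover have "{a, b, c} = {b, a, c}" by auto
  ultimately show ?thesis by (simp add: collinear_3[of b a c])
qed

lemma general_position_cross2_neq_0:
  assumes "general_position p" "distinct [i, j, k]"
  shows "cross2 (p$j - p$i) (p$k - p$i) \<noteq> 0"
  using assms collinear_if_cross2_eq_0 unfolding general_position_def by blast

lemma general_position_neq:
  assumes "general_position p" "i \<noteq> j"
  shows "p$i \<noteq> p$j"
  using assms by (auto simp: general_position_def inj_def)

lemma general_position_not_in_segment: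
  assumes "general_position p" "distinct [i, j, k]"
  shows "p$k \<notin> closed_segment (p$i) (p$j)"
proof
  assume "p$k \<in> closed_segment (p$i) (p$j)"
  then have "{p$i, p$j, p$k} \<subseteq> closed_segment (p$i) (p$j)" by auto
  then have "collinear {p$i, p$j, p$k}" by (meson collinear_closed_segment collinear_subset)
  then show False using assms unfolding general_position_def by blast
qed

section \<open>Strains and infinitesimal rigid motions\<close>

definition strain :: "real^2^'n \<Rightarrow> real^2^'n \<Rightarrow> 'n \<Rightarrow> 'n \<Rightarrow> real" where
  "strain p v i j = (p$i - p$j) \<bullet> (v$i - v$j)"

lemma strain_commute: "strain p v i j = strain p v j i"
  unfolding strain_def by (metis inner_minus_left inner_minus_right minus_diff_eq)

lemma strain_eq_reversed: "strain p v i j = (p$j - p$i) \<bullet> (v$j - v$i)"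
  by (subst strain_commute) (simp add: strain_def)

lemma strain_self [simp]: "strain p v i i = 0"
  by (simp add: strain_def)

lemma strain_add: "strain p (v + w) i j = strain p v i j + strain p w i j"
  by (simp add: strain_def inner_diff_right inner_add_right algebra_simps)

lemma strain_scaleR: "strain p (c *\<^sub>R v) i j = c * strain p v i j"
  by (simp add: strain_def inner_diff_right algebra_simps)

lemma mem_tight_edges_iff: "{i, j} \<in> tight_edges p v \<longleftrightarrow> i \<noteq> j \<and> strain p v i j = 0"
  unfolding tight_edges_def strain_def[symmetric]
  by (auto simp: doubleton_eq_iff strain_commute)

lemma complete_edges_subset_tight_edges:
  assumes "\<forall>i\<in>A. \<forall>j\<in>A. strain p v i j = 0"
  shows "complete_edges A \<subseteq> tight_edges p v"
  using assms by (auto simp: complete_edges_def mem_tight_edges_iff)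

lemma expansion_cone_strain_nonneg: "v \<in> expansion_cone p i1 i2 \<Longrightarrow> 0 \<le> strain p v i j"
  by (cases "i = j") (auto simp: expansion_cone_def strain_def)

definition rotation_rate :: "real^2^'n \<Rightarrow> real^2^'n \<Rightarrow> 'n \<Rightarrow> 'n \<Rightarrow> real" where
  "rotation_rate p v i j = cross2 (p$j - p$i) (v$j - v$i) / ((p$j - p$i) \<bullet> (p$j - p$i))"

lemma rotation_rate_commute: "rotation_rate p v i j = rotation_rate p v j i"
proof -
  have "cross2 (p$i - p$j) (v$i - v$j) = cross2 (p$j - p$i) (v$j - v$i)"
    by (simp add: cross2_def algebra_simps)
  moreover have "(p$i - p$j) \<bullet> (p$i - p$j) = (p$j - p$i) \<bullet> (p$j - p$i)"
    by (metis inner_minus_left inner_minus_right minus_diff_eq)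
  ultimately show ?thesis by (simp add: rotation_rate_def)
qed

lemma velocity_diff_if_strain_eq_0:
  assumes "strain p v i j = 0" "p$i \<noteq> p$j"
  shows "v$j - v$i = rotation_rate p v i j *\<^sub>R rot90 (p$j - p$i)"
proof -
  have "(p$j - p$i) \<bullet> (v$j - v$i) = 0"
    using assms(1) by (simp add: strain_eq_reversed)
  moreover have "p$j - p$i \<noteq> 0" using assms(2) by simp
  ultimately show ?thesis
    unfolding rotation_rate_def by (rule orthogonal_eq_scaleR_rot90)
qed

lemma rigid_triangle:
  assumes "strain p v a b = 0" "strain p v a q = 0" "strain p v b q = 0"
    and "cross2 (p$b - p$a) (p$q - p$a) \<noteq> 0"
  shows "v$q = v$a + rotation_rate p v a b *\<^sub>R rot90 (p$q - p$a)"
proof -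
  let ?\<omega> = "rotation_rate p v a b"
  define w where "w = v$q - v$a - ?\<omega> *\<^sub>R rot90 (p$q - p$a)"
  have "p$a \<noteq> p$b" using assms(4) by (auto simp: cross2_def)
  then have vb: "v$b - v$a = ?\<omega> *\<^sub>R rot90 (p$b - p$a)"
    using velocity_diff_if_strain_eq_0 assms(1) by blast
  have "(p$q - p$a) \<bullet> (v$q - v$a) = 0"
    using assms(2) by (simp add: strain_eq_reversed)
  then have orth_a: "(p$q - p$a) \<bullet> w = 0"
    by (simp add: w_def inner_diff_right)
  have "(p$q - p$b) \<bullet> (v$q - v$b) = 0"
    using assms(3) by (simp add: strain_eq_reversed)
  moreover have "w = (v$q - v$b) - ?\<omega> *\<^sub>R rot90 (p$q - p$b)"
    using vb by (simp add: w_def rot90_diff algebra_simps)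
  ultimately have orth_b: "(p$q - p$b) \<bullet> w = 0"
    by (simp add: inner_diff_right)
  have "cross2 (p$q - p$a) (p$q - p$b) \<noteq> 0"
    using assms(4) by (simp add: cross2_def algebra_simps)
  then have "w = 0" using orthogonal_to_independent_eq_0[OF orth_a orth_b] by blast
  then show ?thesis by (simp add: w_def algebra_simps)
qed

lemma strain_eq_0_if_rigid:
  assumes "v$i = c + \<omega> *\<^sub>R rot90 (p$i - x)" "v$j = c + \<omega> *\<^sub>R rot90 (p$j - x)"
  shows "strain p v i j = 0"
proof -
  have "v$i - v$j = \<omega> *\<^sub>R rot90 ((p$i - x) - (p$j - x))"
    using assms by (simp add: rot90_diff scaleR_diff_right)
  then show ?thesis by (simp add: strain_def)
qed

lemma affine_dependence_strain_sum:
  assumes "(\<Sum>i\<in>S. l i) = 0" "(\<Sum>i\<in>S. l i *\<^sub>R p$i) = 0"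
  shows "(\<Sum>i\<in>S. \<Sum>j\<in>S. l i * l j * strain p v i j) = 0"
proof -
  define a where "a i = l i * (p$i \<bullet> v$i)" for i
  have expand: "l i * l j * strain p v i j = l j * a i + l i * a j
      - (l i *\<^sub>R p$i) \<bullet> (l j *\<^sub>R v$j) - (l j *\<^sub>R p$j) \<bullet> (l i *\<^sub>R v$i)" for i j
    by (simp add: a_def strain_def inner_diff_left inner_diff_right algebra_simps)
  have "(\<Sum>i\<in>S. \<Sum>j\<in>S. l j * a i) = 0" "(\<Sum>i\<in>S. \<Sum>j\<in>S. l i * a j) = 0"
    using assms(1) by (simp_all add: sum_distrib_left[symmetric] sum_distrib_right[symmetric])
  moreover have "(\<Sum>i\<in>S. \<Sum>j\<in>S. (l i *\<^sub>R p$i) \<bullet> (l j *\<^sub>R v$j)) = 0"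
    by (subst sum.swap) (simp only: inner_sum_left[symmetric] assms(2) inner_zero_left sum.neutral_const)
  moreover have "(\<Sum>i\<in>S. \<Sum>j\<in>S. (l j *\<^sub>R p$j) \<bullet> (l i *\<^sub>R v$i)) = 0"
    by (simp only: inner_sum_left[symmetric] assms(2) inner_zero_left sum.neutral_const)
  ultimately show ?thesis
    unfolding expand by (simp only: sum.distrib sum_subtractf)
qed

lemma affine_dependence_strains_eq_0:
  assumes "finite S" "(\<Sum>i\<in>S. l i) = 0" "(\<Sum>i\<in>S. l i *\<^sub>R p$i) = 0" "\<forall>i\<in>S. l i \<noteq> 0"
    and "(\<forall>i\<in>S. \<forall>j\<in>S. 0 \<le> l i * l j * strain p v i j)
       \<or> (\<forall>i\<in>S. \<forall>j\<in>S. l i * l j * strain p v i j \<le> 0)"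
  shows "\<forall>i\<in>S. \<forall>j\<in>S. strain p v i j = 0"
proof -
  define f where "f i j = l i * l j * strain p v i j" for i j
  have sum0: "(\<Sum>i\<in>S. \<Sum>j\<in>S. f i j) = 0"
    unfolding f_def by (rule affine_dependence_strain_sum[OF assms(2,3)])
  have "\<forall>i\<in>S. \<forall>j\<in>S. g i j = 0"
    if "\<forall>i\<in>S. \<forall>j\<in>S. 0 \<le> g i j" "(\<Sum>i\<in>S. \<Sum>j\<in>S. g i j) = 0" for g :: "_ \<Rightarrow> _ \<Rightarrow> real"
    using that assms(1) by (simp add: sum_nonneg sum_nonneg_eq_0_iff)
  from this[of f] this[of "\<lambda>i j. - f i j"] have "\<forall>i\<in>S. \<forall>j\<in>S. f i j = 0"
    using assms(5) sum0 by (auto simp: f_def sum_negf)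
  then show ?thesis using assms(4) by (simp add: f_def)
qed

section \<open>The expansion cone\<close>

definition rigidity_row :: "real^2^'n \<Rightarrow> 'n \<Rightarrow> 'n \<Rightarrow> real^2^'n" where
  "rigidity_row p i j = axis i (p$i - p$j) - axis j (p$i - p$j)"

lemma rigidity_row_inner: "rigidity_row p i j \<bullet> v = strain p v i j"
  by (simp add: rigidity_row_def strain_def inner_diff_left inner_axis' inner_diff_right)

lemma inner_axis_axis: "axis i (axis k 1) \<bullet> (v::real^2^'n) = v$i$k"
  by (simp add: inner_axis')

lemma expansion_cone_eq_Inter:
  "expansion_cone p i1 i2 =
     {v. axis i1 (axis 1 1) \<bullet> v = 0} \<inter> {v. axis i1 (axis 2 1) \<bullet> v = 0} \<inter> {v. axis i2 (axis 1 1) \<bullet> v = 0}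
     \<inter> \<Inter> ((\<lambda>(i, j). {v. rigidity_row p i j \<bullet> v \<ge> 0}) ` {(i, j). i \<noteq> j})"
  by (auto simp: expansion_cone_def normalized_def inner_axis_axis rigidity_row_inner strain_def)

lemma polyhedron_expansion_cone: "polyhedron (expansion_cone p i1 i2)"
  unfolding expansion_cone_eq_Inter
  by (intro polyhedron_Int polyhedron_Inter polyhedron_hyperplane)
     (auto simp: polyhedron_halfspace_ge)

lemma cone_expansion_cone: "cone (expansion_cone p i1 i2)"
  unfolding cone_def expansion_cone_def normalized_def strain_def[symmetric]
  by (auto simp: strain_scaleR)

lemma normalized_trivial_motion_eq_0:
  assumes gp: "general_position p" and "i1 \<noteq> i2" and y: "(p$i1)$2 \<noteq> (p$i2)$2"
    and "normalized i1 i2 w" and trivial: "\<forall>i j. strain p w i j = 0"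
  shows "w = 0"
proof -
  have w1: "w$i1 = 0" using assms(4) by (simp add: normalized_def vec2_eq_iff)
  have "(p$i2 - p$i1) \<bullet> w$i2 = 0" using trivial w1 by (metis strain_def diff_zero)
  then have "(p$i2 - p$i1)$2 * (w$i2)$2 = 0" using assms(4) by (simp add: inner_vec2 normalized_def)
  then have w2: "w$i2 = 0" using y assms(4) by (simp add: vec2_eq_iff normalized_def)
  have "w$k = 0" if "k \<noteq> i1" "k \<noteq> i2" for k
  proof (rule orthogonal_to_independent_eq_0)
    show "(p$k - p$i1) \<bullet> w$k = 0" "(p$k - p$i2) \<bullet> w$k = 0"
      using trivial w1 w2 by (metis strain_def diff_zero)+
    have "distinct [k, i1, i2]" using that assms(2) by simp
    then have "cross2 (p$i1 - p$k) (p$i2 - p$k) \<noteq> 0" by (rule general_position_cross2_neq_0[OF gp])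
    then show "cross2 (p$k - p$i1) (p$k - p$i2) \<noteq> 0" by (simp add: cross2_def algebra_simps)
  qed
  then show ?thesis using w1 w2 by (metis vec_eq_iff zero_index)
qed

lemma zero_extreme_point_of_expansion_cone:
  assumes "general_position p" "i1 \<noteq> i2" "(p$i1)$2 \<noteq> (p$i2)$2"
  shows "0 extreme_point_of (expansion_cone p i1 i2)"
  unfolding extreme_point_of_def
proof (intro conjI ballI)
  show "0 \<in> expansion_cone p i1 i2" by (simp add: expansion_cone_def normalized_def)
next
  fix a b assume a: "a \<in> expansion_cone p i1 i2" and b: "b \<in> expansion_cone p i1 i2"
  show "0 \<notin> open_segment a b"
  proof
    assume "0 \<in> open_segment a b"
    then obtain u where "a \<noteq> b" "0 < u" "u < 1" "(1 - u) *\<^sub>R a + u *\<^sub>R b = 0"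
      unfolding in_segment by metis
    have "strain p a i j = 0" for i j
    proof -
      have "0 \<le> strain p a i j" "0 \<le> strain p b i j"
        using a b expansion_cone_strain_nonneg by blast+
      then have "0 \<le> (1 - u) * strain p a i j" "0 \<le> u * strain p b i j"
        using \<open>0 < u\<close> \<open>u < 1\<close> by simp_all
      moreover have "strain p ((1 - u) *\<^sub>R a + u *\<^sub>R b) i j = 0"
        unfolding \<open>(1 - u) *\<^sub>R a + u *\<^sub>R b = 0\<close> by (simp add: strain_def)
      then have "(1 - u) * strain p a i j + u * strain p b i j = 0"
        by (simp add: strain_add strain_scaleR)
      ultimately have "(1 - u) * strain p a i j = 0" by linarith
      then show ?thesis using \<open>u < 1\<close> by simp
    qed
    then have "a = 0"
      using normalized_trivial_motion_eq_0[OF assms] a by (simp add: expansion_cone_def)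
    moreover have "b = 0" using \<open>a = 0\<close> \<open>(1 - u) *\<^sub>R a + u *\<^sub>R b = 0\<close> \<open>0 < u\<close> by simp
    ultimately show False using \<open>a \<noteq> b\<close> by simp
  qed
qed

lemma subspace_normalized: "subspace {v. normalized i1 i2 (v::real^2^'n)}"
  by (auto simp: subspace_def normalized_def)

lemma dim_normalized:
  assumes "i1 \<noteq> i2"
  shows "dim {v. normalized i1 i2 (v::real^2^'n)} = 2 * CARD('n) - 3"
proof -
  define B :: "(real^2^'n) set"
    where "B = Basis - {axis i1 (axis 1 1), axis i1 (axis 2 1), axis i2 (axis 1 1)}"
  have "card {axis i1 (axis 1 1), axis i1 (axis 2 1), axis i2 (axis 1 (1::real)) :: real^2^'n} = 3"
    using assms by (simp add: axis_eq_axis)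
  moreover have "{axis i1 (axis 1 1), axis i1 (axis 2 1), axis i2 (axis 1 1)} \<subseteq> (Basis :: (real^2^'n) set)"
    by simp
  ultimately have "card B = card (Basis :: (real^2^'n) set) - 3"
    unfolding B_def by (simp add: card_Diff_subset)
  then have "card B = 2 * CARD('n) - 3" by simp
  moreover have "independent B" unfolding B_def by (rule independent_mono[OF independent_Basis]) auto
  moreover have "{v. normalized i1 i2 v} = span B"
  proof
    show "{v. normalized i1 i2 v} \<subseteq> span B"
    proof
      fix v :: "real^2^'n" assume "v \<in> {v. normalized i1 i2 v}"
      then have "v \<bullet> b = 0" if "b \<in> Basis - B" for b
        using that by (auto simp: B_def inner_commute[of v] inner_axis_axis normalized_def)
      then have "v = (\<Sum>b\<in>B. (v \<bullet> b) *\<^sub>R b)"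
        by (subst euclidean_representation[symmetric, of v])
           (rule sum.mono_neutral_right, auto simp: B_def)
      also have "\<dots> \<in> span B" by (intro span_sum span_mul span_base)
      finally show "v \<in> span B" .
    qed
    have "B \<subseteq> {v. normalized i1 i2 v}"
      by (auto simp: B_def Basis_vec_def normalized_def axis_def vec_eq_iff forall_2)
    then show "span B \<subseteq> {v. normalized i1 i2 v}"
      by (rule span_minimal[OF _ subspace_normalized])
  qed
  ultimately show ?thesis by (metis dim_span_eq_card_independent)
qed

lemma aff_dim_expansion_cone:
  fixes p :: "real^2^'n"
  assumes gp: "general_position p" and "i1 \<noteq> i2" and y: "(p$i1)$2 \<noteq> (p$i2)$2"
    and "CARD('n) \<ge> 3"
  shows "aff_dim (expansion_cone p i1 i2) = 2 * int CARD('n) - 3"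
proof -
  let ?S = "expansion_cone p i1 i2" and ?L = "{v. normalized i1 i2 (v::real^2^'n)}"
  define c where "c = (p$i2 - p$i1)$1 / (p$i2 - p$i1)$2"
  \<comment> \<open>a dilation plus the rotation that makes it normalized; all its strains are positive\<close>
  define v0 :: "real^2^'n" where "v0 = (\<chi> k. (p$k - p$i1) + c *\<^sub>R rot90 (p$k - p$i1))"
  have v0_strain: "strain p v0 i j = (p$i - p$j) \<bullet> (p$i - p$j)" for i j
  proof -
    have "v0$i - v0$j = (p$i - p$j) + c *\<^sub>R rot90 (p$i - p$j)"
      by (simp add: v0_def rot90_diff algebra_simps)
    then show ?thesis by (simp add: strain_def inner_add_right)
  qed
  have "c * (p$i2 - p$i1)$2 = (p$i2 - p$i1)$1" using y by (simp add: c_def)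
  then have "normalized i1 i2 v0" by (simp add: v0_def normalized_def algebra_simps)
  have "?L \<subseteq> span ?S"
  proof
    fix w :: "real^2^'n" assume w: "w \<in> ?L"
    have "\<forall>\<^sub>F \<epsilon> in at_right 0. i \<noteq> j \<longrightarrow> \<epsilon> * \<bar>strain p w i j\<bar> < strain p v0 i j" for i j
    proof (cases "i = j")
      case False
      then have "0 < strain p v0 i j" using general_position_neq[OF gp] by (simp add: v0_strain)
      moreover have "((\<lambda>\<epsilon>. \<epsilon> * \<bar>strain p w i j\<bar>) \<longlongrightarrow> 0) (at_right 0)"
        by (auto intro!: tendsto_eq_intros)
      ultimately show ?thesis by (simp add: order_tendstoD(2))
    qed simp
    then have "\<forall>\<^sub>F \<epsilon> in at_right 0. \<forall>i j. i \<noteq> j \<longrightarrow> \<epsilon> * \<bar>strain p w i j\<bar> < strain p v0 i j"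
      by (intro eventually_all_finite)
    then obtain b :: real where "0 < b"
      and small: "\<And>\<epsilon>. 0 < \<epsilon> \<Longrightarrow> \<epsilon> < b \<Longrightarrow> \<forall>i j. i \<noteq> j \<longrightarrow> \<epsilon> * \<bar>strain p w i j\<bar> < strain p v0 i j"
      unfolding eventually_at_right_field by auto
    define \<epsilon> where "\<epsilon> = b / 2"
    have "0 < \<epsilon>" "\<epsilon> < b" using \<open>0 < b\<close> by (simp_all add: \<epsilon>_def)
    have "v0 + \<epsilon> *\<^sub>R w \<in> ?S"
    proof -
      have "normalized i1 i2 (v0 + \<epsilon> *\<^sub>R w)"
        using \<open>normalized i1 i2 v0\<close> w by (simp add: normalized_def)
      moreover have "0 \<le> strain p (v0 + \<epsilon> *\<^sub>R w) i j" if "i \<noteq> j" for i j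
      proof -
        have "\<epsilon> * - \<bar>strain p w i j\<bar> \<le> \<epsilon> * strain p w i j"
          using \<open>0 < \<epsilon>\<close> by (intro mult_left_mono) auto
        moreover have "\<epsilon> * \<bar>strain p w i j\<bar> < strain p v0 i j"
          using small[OF \<open>0 < \<epsilon>\<close> \<open>\<epsilon> < b\<close>] that by blast
        ultimately show ?thesis by (simp add: strain_add strain_scaleR)
      qed
      ultimately show ?thesis by (simp add: expansion_cone_def strain_def)
    qed
    moreover have "v0 \<in> ?S"
      using \<open>normalized i1 i2 v0\<close> by (simp add: expansion_cone_def v0_strain[unfolded strain_def])
    ultimately have "(1 / \<epsilon>) *\<^sub>R ((v0 + \<epsilon> *\<^sub>R w) - v0) \<in> span ?S"
      by (intro span_mul span_diff span_base)
    then show "w \<in> span ?S" using \<open>0 < \<epsilon>\<close> by simp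
  qed
  moreover have "span ?S \<subseteq> ?L"
    by (rule span_minimal[OF _ subspace_normalized]) (auto simp: expansion_cone_def)
  ultimately have "dim ?S = dim ?L" by (metis dim_span subset_antisym)
  moreover have "0 \<in> affine hull ?S"
    by (intro hull_inc) (simp add: expansion_cone_def normalized_def)
  then have "aff_dim ?S = int (dim ?S)" using aff_dim_eq_dim[of 0 ?S] by simp
  ultimately show ?thesis using dim_normalized[OF assms(2)] assms(4) by (simp add: of_nat_diff)
qed

section \<open>Crossing edges and stars\<close>

lemma crossing_edges_rigid:
  assumes gp: "general_position p" and nonneg: "\<forall>i j. 0 \<le> strain p v i j"
    and dist: "distinct [a, b, c, d]" and ab: "strain p v a b = 0" and cd: "strain p v c d = 0"
    and cross: "closed_segment (p$a) (p$b) \<inter> closed_segment (p$c) (p$d) \<noteq> {}"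
  shows "\<forall>i\<in>{a, b, c, d}. \<forall>j\<in>{a, b, c, d}. strain p v i j = 0"
proof -
  obtain z where z: "z \<in> closed_segment (p$a) (p$b)" "z \<in> closed_segment (p$c) (p$d)"
    using cross by blast
  have "p$a \<notin> closed_segment (p$c) (p$d)" "p$b \<notin> closed_segment (p$c) (p$d)"
    "p$c \<notin> closed_segment (p$a) (p$b)" "p$d \<notin> closed_segment (p$a) (p$b)"
    using dist by (auto intro!: general_position_not_in_segment[OF gp])
  then have "z \<in> open_segment (p$a) (p$b)" "z \<in> open_segment (p$c) (p$d)"
    using z by (auto simp: open_segment_def)
  then obtain s t where s: "0 < s" "s < 1" "z = (1 - s) *\<^sub>R p$a + s *\<^sub>R p$b"
    and t: "0 < t" "t < 1" "z = (1 - t) *\<^sub>R p$c + t *\<^sub>R p$d"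
    unfolding in_segment by blast
  define l where "l i = (if i = a then 1 - s else if i = b then s else if i = c then t - 1 else - t)" for i
  let ?S = "{a, b, c, d}"
  have l: "l a = 1 - s" "l b = s" "l c = t - 1" "l d = - t"
    using dist by (auto simp: l_def)
  have pos: "0 < l i" if "i \<in> {a, b}" for i using that l s by auto
  have neg: "l i < 0" if "i \<in> {c, d}" for i using that l t by auto
  have "(\<Sum>i\<in>?S. l i) = 0" using dist l by simp
  moreover have "(\<Sum>i\<in>?S. l i *\<^sub>R p$i) = 0"
  proof -
    have "(\<Sum>i\<in>?S. l i *\<^sub>R p$i) = ((1 - s) *\<^sub>R p$a + s *\<^sub>R p$b) - ((1 - t) *\<^sub>R p$c + t *\<^sub>R p$d)"
      using dist by (simp add: l algebra_simps)
    then show ?thesis using s(3) t(3) by simp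
  qed
  moreover have "\<forall>i\<in>?S. l i \<noteq> 0" using pos neg by fastforce
  moreover have "l i * l j * strain p v i j \<le> 0" if "i \<in> ?S" "j \<in> ?S" for i j
  proof (cases "{i, j} \<subseteq> {a, b} \<or> {i, j} \<subseteq> {c, d}")
    case True
    then have "strain p v i j = 0"
      using ab cd by (auto simp: strain_commute[of p v b a] strain_commute[of p v d c])
    then show ?thesis by simp
  next
    case False
    then have "l i * l j < 0"
      using that pos neg by (auto simp: mult_pos_neg mult_neg_pos)
    then show ?thesis using nonneg by (simp add: mult_nonpos_nonneg)
  qed
  ultimately show ?thesis
    by (intro affine_dependence_strains_eq_0) auto
qed

lemma finite_transitive_has_maximal:
  assumes "finite J" "J \<noteq> {}" "\<forall>x\<in>J. \<not> R x x"
    and "\<forall>x\<in>J. \<forall>y\<in>J. \<forall>z\<in>J. R x y \<longrightarrow> R y z \<longrightarrow> R x z"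
  shows "\<exists>m\<in>J. \<forall>x\<in>J. \<not> R m x"
proof -
  let ?r = "{(y, x). x \<in> J \<and> y \<in> J \<and> R x y}"
  have "?r \<subseteq> J \<times> J" by auto
  then have "finite ?r" using assms(1) finite_subset by blast
  moreover have "trans ?r" using assms(4) by (auto simp: trans_def)
  then have "acyclic ?r" using assms(3) by (auto simp: acyclic_def)
  ultimately have "wf ?r" by (rule finite_acyclic_wf)
  then obtain m where "m \<in> J" "\<And>y. (y, m) \<in> ?r \<Longrightarrow> y \<notin> J"
    using assms(2) by (rule wfE_min') blast
  then show ?thesis by blast
qed

lemma cross2_inner_identity:
  "cross2 x y * (a \<bullet> z) + cross2 y z * (a \<bullet> x) + cross2 z x * (a \<bullet> y) = 0"
  by (simp add: cross2_def inner_vec2 algebra_simps)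

lemma ccw_transitive_in_halfplane:
  fixes a x y z :: "real^2"
  assumes "a \<noteq> 0" "0 \<le> a \<bullet> x" "0 \<le> a \<bullet> y" "0 \<le> a \<bullet> z"
    and xy: "0 < cross2 x y" and yz: "0 < cross2 y z" and "cross2 z x \<noteq> 0"
  shows "0 < cross2 x z"
proof -
  have "\<not> 0 < cross2 z x"
  proof
    assume zx: "0 < cross2 z x"
    have "0 \<le> cross2 x y * (a \<bullet> z)" "0 \<le> cross2 y z * (a \<bullet> x)" "0 \<le> cross2 z x * (a \<bullet> y)"
      using assms(2-4) xy yz zx by simp_all
    then have "cross2 y z * (a \<bullet> x) = 0" "cross2 z x * (a \<bullet> y) = 0"
      using cross2_inner_identity[of x y a z] by linarith+
    then have "a \<bullet> x = 0" "a \<bullet> y = 0" using yz zx by auto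
    then have "cross2 x y = 0" using cross2_eq_0_if_orthogonal[OF assms(1)] by blast
    then show False using xy by simp
  qed
  then show ?thesis using assms(7) cross2_commute[of z x] by linarith
qed

lemma ccw_cycle_not_in_halfplane:
  fixes u :: "'a \<Rightarrow> real^2"
  assumes "finite J" "J \<noteq> {}" "a \<noteq> 0"
    and indep: "\<forall>q\<in>J. \<forall>q'\<in>J. q \<noteq> q' \<longrightarrow> cross2 (u q) (u q') \<noteq> 0"
    and ccw: "\<forall>q\<in>J. \<exists>q'\<in>J. 0 < cross2 (u q) (u q')"
  shows "\<exists>q\<in>J. a \<bullet> u q < 0"
proof (rule ccontr)
  assume "\<not> ?thesis"
  then have half: "\<forall>q\<in>J. 0 \<le> a \<bullet> u q" by force
  let ?R = "\<lambda>q q'. 0 < cross2 (u q) (u q')"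
  have "?R x z" if "x \<in> J" "y \<in> J" "z \<in> J" "?R x y" "?R y z" for x y z
  proof (rule ccw_transitive_in_halfplane[OF assms(3)])
    show "0 \<le> a \<bullet> u x" "0 \<le> a \<bullet> u y" "0 \<le> a \<bullet> u z" using that(1-3) half by auto
    show "?R x y" "?R y z" by fact+
    have "x \<noteq> z" using that(4,5) cross2_commute[of "u y" "u x"] by auto
    then show "cross2 (u z) (u x) \<noteq> 0" using that(1,3) indep by auto
  qed
  moreover have "\<forall>x\<in>J. \<not> ?R x x" by simp
  ultimately obtain m where "m \<in> J" "\<forall>x\<in>J. \<not> ?R m x"
    using finite_transitive_has_maximal[OF assms(1,2), of ?R] by blast
  then show False using ccw by blast
qed

lemma nonneg_combination_eq_0_pos_at:
  fixes u :: "'a \<Rightarrow> 'b::euclidean_space"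
  assumes fin: "finite J" and no_halfspace: "\<And>a. a \<noteq> 0 \<Longrightarrow> \<exists>q\<in>J. a \<bullet> u q < 0"
    and j: "j \<in> J"
  shows "\<exists>\<nu>. (\<forall>q\<in>J. 0 \<le> \<nu> q) \<and> 0 < \<nu> j \<and> (\<Sum>q\<in>J. \<nu> q *\<^sub>R u q) = 0"
proof (rule ccontr)
  assume none: "\<not> ?thesis"
  define K where "K = {(\<Sum>q\<in>J. \<nu> q *\<^sub>R u q) | \<nu>. (\<forall>q\<in>J. 0 \<le> \<nu> q) \<and> 1 \<le> \<nu> j}"
  have "convex K"
    unfolding convex_def
  proof (intro ballI allI impI)
    fix x y and s t :: real
    assume "x \<in> K" "y \<in> K" and st: "0 \<le> s" "0 \<le> t" "s + t = 1"
    then obtain \<nu> \<nu>' where \<nu>: "\<forall>q\<in>J. 0 \<le> \<nu> q" "1 \<le> \<nu> j" "x = (\<Sum>q\<in>J. \<nu> q *\<^sub>R u q)"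
      and \<nu>': "\<forall>q\<in>J. 0 \<le> \<nu>' q" "1 \<le> \<nu>' j" "y = (\<Sum>q\<in>J. \<nu>' q *\<^sub>R u q)"
      unfolding K_def by blast
    define \<rho> where "\<rho> q = s * \<nu> q + t * \<nu>' q" for q
    have "s *\<^sub>R x + t *\<^sub>R y = (\<Sum>q\<in>J. \<rho> q *\<^sub>R u q)"
      by (simp add: \<nu>(3) \<nu>'(3) \<rho>_def scaleR_sum_right sum.distrib scaleR_add_left)
    moreover have "\<forall>q\<in>J. 0 \<le> \<rho> q" using \<nu> \<nu>' st by (simp add: \<rho>_def)
    moreover have "s * 1 + t * 1 \<le> \<rho> j"
      unfolding \<rho>_def using \<nu>(2) \<nu>'(2) st by (intro add_mono mult_left_mono) auto
    ultimately show "s *\<^sub>R x + t *\<^sub>R y \<in> K" unfolding K_def using st(3) by auto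
  qed
  moreover have "0 \<notin> K"
  proof
    assume "0 \<in> K"
    then obtain \<nu> where "\<forall>q\<in>J. 0 \<le> \<nu> q" "1 \<le> \<nu> j" "(\<Sum>q\<in>J. \<nu> q *\<^sub>R u q) = 0"
      unfolding K_def by auto
    then have "(\<forall>q\<in>J. 0 \<le> \<nu> q) \<and> 0 < \<nu> j \<and> (\<Sum>q\<in>J. \<nu> q *\<^sub>R u q) = 0" by simp
    then show False using none by blast
  qed
  ultimately obtain a where a: "a \<noteq> 0" "\<forall>x\<in>K. 0 \<le> a \<bullet> x"
    using separating_hyperplane_set_0 by blast
  obtain q where q: "q \<in> J" "a \<bullet> u q < 0" using no_halfspace[OF a(1)] by blast
  define N where "N = (\<bar>a \<bullet> u j\<bar> + 1) / - (a \<bullet> u q)"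
  have N: "0 < N" "N * (a \<bullet> u q) = - (\<bar>a \<bullet> u j\<bar> + 1)"
    using q(2) unfolding N_def by (simp_all add: divide_pos_neg)
  define \<nu> where "\<nu> i = (if i = j then 1 else 0) + (if i = q then N else 0)" for i
  have "\<nu> i *\<^sub>R u i = (if i = j then u j else 0) + (if i = q then N *\<^sub>R u q else 0)" for i
    by (simp add: \<nu>_def scaleR_add_left)
  then have "(\<Sum>i\<in>J. \<nu> i *\<^sub>R u i) = u j + N *\<^sub>R u q"
    using fin j q(1) by (simp add: sum.distrib)
  moreover have "\<forall>i\<in>J. 0 \<le> \<nu> i" "1 \<le> \<nu> j" using N by (simp_all add: \<nu>_def)
  ultimately have "u j + N *\<^sub>R u q \<in> K" unfolding K_def by force
  then have "0 \<le> a \<bullet> (u j + N *\<^sub>R u q)" using a(2) by blast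
  then have "0 \<le> a \<bullet> u j + N * (a \<bullet> u q)" by (simp add: inner_add_right)
  then show False using N(2) by linarith
qed

lemma positive_combination_eq_0:
  fixes u :: "'a \<Rightarrow> 'b::euclidean_space"
  assumes fin: "finite J" and no_halfspace: "\<And>a. a \<noteq> 0 \<Longrightarrow> \<exists>q\<in>J. a \<bullet> u q < 0"
  shows "\<exists>\<mu>. (\<forall>q\<in>J. 0 < \<mu> q) \<and> (\<Sum>q\<in>J. \<mu> q *\<^sub>R u q) = 0"
proof -
  obtain \<nu> where \<nu>: "\<forall>j\<in>J. (\<forall>q\<in>J. 0 \<le> \<nu> j q) \<and> 0 < \<nu> j j \<and> (\<Sum>q\<in>J. \<nu> j q *\<^sub>R u q) = 0"
    using nonneg_combination_eq_0_pos_at[OF fin no_halfspace] by metis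
  define \<mu> where "\<mu> q = (\<Sum>j\<in>J. \<nu> j q)" for q
  have "0 < \<mu> q" if "q \<in> J" for q
  proof -
    have "\<nu> q q \<le> \<mu> q"
      unfolding \<mu>_def using that \<nu> fin by (intro member_le_sum) auto
    moreover have "0 < \<nu> q q" using that \<nu> by blast
    ultimately show ?thesis by linarith
  qed
  moreover have "(\<Sum>q\<in>J. \<mu> q *\<^sub>R u q) = (\<Sum>j\<in>J. \<Sum>q\<in>J. \<nu> j q *\<^sub>R u q)"
    unfolding \<mu>_def scaleR_sum_left by (rule sum.swap)
  then have "(\<Sum>q\<in>J. \<mu> q *\<^sub>R u q) = 0" using \<nu> by simp
  ultimately show ?thesis by blast
qed

lemma consecutive_angles_positive_combination:
  assumes gp: "general_position p" and angles: "consecutive_angles_le_pi p k J"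
  shows "\<exists>\<mu>. (\<forall>q\<in>J. 0 < \<mu> q) \<and> (\<Sum>q\<in>J. \<mu> q *\<^sub>R (p$q - p$k)) = 0"
proof -
  have kJ: "k \<notin> J" and "J \<noteq> {}" using angles by (auto simp: consecutive_angles_le_pi_def)
  define u where "u q = p$q - p$k" for q
  have indep: "\<forall>q\<in>J. \<forall>q'\<in>J. q \<noteq> q' \<longrightarrow> cross2 (u q) (u q') \<noteq> 0"
  proof (intro ballI impI)
    fix q q' assume "q \<in> J" "q' \<in> J" "q \<noteq> q'"
    then have "distinct [k, q, q']" using kJ by auto
    then show "cross2 (u q) (u q') \<noteq> 0"
      unfolding u_def by (rule general_position_cross2_neq_0[OF gp])
  qed
  have "\<exists>q'\<in>J. 0 < cross2 (u q) (u q')" if q: "q \<in> J" for q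
  proof -
    obtain q' where q': "q' \<in> J"
      and "0 < cross2 (u q) (u q') \<or> (cross2 (u q) (u q') = 0 \<and> u q \<bullet> u q' < 0)"
      using angles q unfolding consecutive_angles_le_pi_def u_def by blast
    moreover have "u q \<bullet> u q' \<ge> 0" if "cross2 (u q) (u q') = 0"
      using that indep q q' by (cases "q = q'") auto
    ultimately show ?thesis by force
  qed
  then show ?thesis
    using positive_combination_eq_0[of J u] ccw_cycle_not_in_halfplane[OF _ \<open>J \<noteq> {}\<close> _ indep]
    by (auto simp: u_def)
qed

lemma star_rigid:
  assumes gp: "general_position p" and nonneg: "\<forall>i j. 0 \<le> strain p v i j"
    and angles: "consecutive_angles_le_pi p k J" and tight: "\<forall>j\<in>J. strain p v k j = 0"
  shows "\<forall>i\<in>insert k J. \<forall>j\<in>insert k J. strain p v i j = 0"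
proof -
  have kJ: "k \<notin> J" and "J \<noteq> {}" using angles by (auto simp: consecutive_angles_le_pi_def)
  obtain \<mu> where \<mu>: "\<forall>q\<in>J. 0 < \<mu> q" "(\<Sum>q\<in>J. \<mu> q *\<^sub>R (p$q - p$k)) = 0"
    using consecutive_angles_positive_combination[OF gp angles] by blast
  define l where "l i = (if i = k then - (\<Sum>q\<in>J. \<mu> q) else \<mu> i)" for i
  have lJ: "(\<Sum>q\<in>J. l q) = (\<Sum>q\<in>J. \<mu> q)" "(\<Sum>q\<in>J. l q *\<^sub>R p$q) = (\<Sum>q\<in>J. \<mu> q *\<^sub>R p$q)"
    using kJ by (auto simp: l_def intro!: sum.cong)
  have "(\<Sum>i\<in>insert k J. l i) = 0"
    using kJ lJ by (simp add: l_def)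
  moreover have "(\<Sum>i\<in>insert k J. l i *\<^sub>R p$i) = (\<Sum>q\<in>J. \<mu> q *\<^sub>R (p$q - p$k))"
    using kJ lJ by (simp add: l_def scaleR_diff_right sum_subtractf scaleR_sum_left)
  then have "(\<Sum>i\<in>insert k J. l i *\<^sub>R p$i) = 0" using \<mu>(2) by simp
  moreover have "\<forall>i\<in>insert k J. l i \<noteq> 0"
    using \<mu>(1) \<open>J \<noteq> {}\<close> sum_pos[of J \<mu>] by (auto simp: l_def)
  moreover have "0 \<le> l i * l j * strain p v i j" if "i \<in> insert k J" "j \<in> insert k J" for i j
  proof (cases "i = k \<or> j = k")
    case True
    then have "strain p v i j = 0" using that tight strain_commute[of p v _ k] by auto
    then show ?thesis by simp
  next
    case False
    then have "0 < l i" "0 < l j" using that \<mu>(1) by (auto simp: l_def)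
    then show ?thesis using nonneg by simp
  qed
  ultimately show ?thesis
    by (intro affine_dependence_strains_eq_0) auto
qed

section \<open>Convex polygons\<close>

lemma cross2_eq_slope_diff:
  assumes "c \<bullet> x \<noteq> 0" "c \<bullet> y \<noteq> 0"
  shows "cross2 x y * (c \<bullet> c)
    = (c \<bullet> x) * (c \<bullet> y) * (cross2 c y / (c \<bullet> y) - cross2 c x / (c \<bullet> x))"
proof -
  have "cross2 x y * (c \<bullet> c) = (c \<bullet> x) * cross2 c y - cross2 c x * (c \<bullet> y)"
    by (simp add: cross2_def inner_vec2 algebra_simps)
  also have "\<dots> = (c \<bullet> x) * (c \<bullet> y) * (cross2 c y / (c \<bullet> y) - cross2 c x / (c \<bullet> x))"
    using assms by (simp add: field_simps)
  finally show ?thesis .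
qed

lemma extreme_directions:
  fixes u :: "'a \<Rightarrow> real^2"
  assumes "finite S" "S \<noteq> {}" and pos: "\<forall>q\<in>S. 0 < c \<bullet> u q"
    and indep: "\<forall>q\<in>S. \<forall>q'\<in>S. q \<noteq> q' \<longrightarrow> cross2 (u q) (u q') \<noteq> 0"
  shows "\<exists>a\<in>S. \<forall>q\<in>S - {a}. 0 < cross2 (u a) (u q)"
    and "\<exists>b\<in>S. \<forall>q\<in>S - {b}. cross2 (u b) (u q) < 0"
proof -
  define f where "f q = cross2 c (u q) / (c \<bullet> u q)" for q
  have cc: "0 < c \<bullet> c" using assms(2) pos by force
  have sign: "cross2 (u x) (u y) * (c \<bullet> c) = (c \<bullet> u x) * (c \<bullet> u y) * (f y - f x)"
    if "x \<in> S" "y \<in> S" for x y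
    unfolding f_def using pos that by (intro cross2_eq_slope_diff) auto
  obtain a where a: "a \<in> S" "\<forall>q\<in>S. f a \<le> f q"
    using ex_is_arg_min_if_finite[OF assms(1,2), of f] by (force simp: is_arg_min_def)
  show "\<exists>a\<in>S. \<forall>q\<in>S - {a}. 0 < cross2 (u a) (u q)"
  proof (intro bexI ballI)
    fix q assume q: "q \<in> S - {a}"
    then have "0 \<le> cross2 (u a) (u q) * (c \<bullet> c)"
      unfolding sign[OF a(1) DiffD1[OF q]] using pos a by (intro mult_nonneg_nonneg) (auto intro: less_imp_le)
    then have "0 \<le> cross2 (u a) (u q)" using cc by (simp add: zero_le_mult_iff)
    moreover have "cross2 (u a) (u q) \<noteq> 0" using indep a(1) q by auto
    ultimately show "0 < cross2 (u a) (u q)" by linarith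
  qed (fact a(1))
  obtain b where b: "b \<in> S" "\<forall>q\<in>S. f q \<le> f b"
    using ex_is_arg_min_if_finite[OF assms(1,2), of "\<lambda>q. - f q"] by (force simp: is_arg_min_def)
  show "\<exists>b\<in>S. \<forall>q\<in>S - {b}. cross2 (u b) (u q) < 0"
  proof (intro bexI ballI)
    fix q assume q: "q \<in> S - {b}"
    then have "cross2 (u b) (u q) * (c \<bullet> c) \<le> 0"
      unfolding sign[OF b(1) DiffD1[OF q]] using pos b
      by (intro mult_nonneg_nonpos mult_nonneg_nonneg) (auto intro: less_imp_le)
    then have "cross2 (u b) (u q) \<le> 0" using cc by (simp add: mult_le_0_iff)
    moreover have "cross2 (u b) (u q) \<noteq> 0" using indep b(1) q by auto
    ultimately show "cross2 (u b) (u q) < 0" by linarith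
  qed (fact b(1))
qed

definition convex_position :: "real^2^'n \<Rightarrow> 'n set \<Rightarrow> bool" where
  "convex_position p Q \<longleftrightarrow> (\<forall>q\<in>Q. p$q \<notin> convex hull ((\<lambda>k. p$k) ` (Q - {q})))"

text \<open>The directed segment from \<open>p\<^sub>i\<close> to \<open>p\<^sub>j\<close> is a boundary edge of the convex hull of \<open>Q\<close>,
  traversed counterclockwise.\<close>

definition left_hull_edge :: "real^2^'n \<Rightarrow> 'n set \<Rightarrow> 'n \<Rightarrow> 'n \<Rightarrow> bool" where
  "left_hull_edge p Q i j \<longleftrightarrow> i \<in> Q \<and> j \<in> Q \<and> i \<noteq> j \<and>
     (\<forall>q\<in>Q - {i, j}. 0 < cross2 (p$j - p$i) (p$q - p$i))"

lemma convex_position_subset: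
  assumes "convex_position p Q" "Q' \<subseteq> Q"
  shows "convex_position p Q'"
  unfolding convex_position_def
proof
  fix q assume "q \<in> Q'"
  moreover have "convex hull ((\<lambda>k. p$k) ` (Q' - {q})) \<subseteq> convex hull ((\<lambda>k. p$k) ` (Q - {q}))"
    using assms(2) by (intro hull_mono image_mono) auto
  ultimately show "p$q \<notin> convex hull ((\<lambda>k. p$k) ` (Q' - {q}))"
    using assms unfolding convex_position_def by blast
qed

lemma convex_polygon_convex_position:
  assumes "general_position p" "convex_polygon p Q"
  shows "convex_position p Q"
  unfolding convex_position_def
proof
  fix q assume q: "q \<in> Q"
  let ?C = "convex hull ((\<lambda>i. p$i) ` Q)"
  have "p$q extreme_point_of ?C" using assms(2) q by (simp add: convex_polygon_def)
  then have "convex (?C - {p$q})" by (simp add: extreme_point_of_stillconvex)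
  moreover have "(\<lambda>k. p$k) ` (Q - {q}) \<subseteq> ?C - {p$q}"
    using general_position_neq[OF assms(1)] by (auto intro: hull_inc)
  ultimately have "convex hull ((\<lambda>k. p$k) ` (Q - {q})) \<subseteq> ?C - {p$q}"
    by (intro hull_minimal)
  then show "p$q \<notin> convex hull ((\<lambda>k. p$k) ` (Q - {q}))" by blast
qed

lemma left_hull_edge_subset:
  "left_hull_edge p Q i j \<Longrightarrow> Q' \<subseteq> Q \<Longrightarrow> i \<in> Q' \<Longrightarrow> j \<in> Q' \<Longrightarrow> left_hull_edge p Q' i j"
  unfolding left_hull_edge_def by blast

lemma left_hull_edge_unique_succ:
  assumes "left_hull_edge p Q i a" "left_hull_edge p Q i a'"
  shows "a = a'"
proof (rule ccontr)
  assume "a \<noteq> a'"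
  then have "0 < cross2 (p$a - p$i) (p$a' - p$i)" "0 < cross2 (p$a' - p$i) (p$a - p$i)"
    using assms unfolding left_hull_edge_def by auto
  then show False using cross2_commute[of "p$a - p$i" "p$a' - p$i"] by linarith
qed

lemma left_hull_edge_unique_pred:
  assumes "left_hull_edge p Q b i" "left_hull_edge p Q b' i"
  shows "b = b'"
proof (rule ccontr)
  assume "b \<noteq> b'"
  then have "0 < cross2 (p$i - p$b) (p$b' - p$b)" "0 < cross2 (p$i - p$b') (p$b - p$b')"
    using assms unfolding left_hull_edge_def by auto
  moreover have "cross2 (p$i - p$b') (p$b - p$b') = - cross2 (p$i - p$b) (p$b' - p$b)"
    by (simp add: cross2_def algebra_simps)
  ultimately show False by linarith
qed

lemma left_hull_edge_not_sym:
  assumes "left_hull_edge p Q i j" "q \<in> Q - {i, j}"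
  shows "\<not> left_hull_edge p Q j i"
proof
  assume "left_hull_edge p Q j i"
  then have "0 < cross2 (p$i - p$j) (p$q - p$j)"
    using assms(2) unfolding left_hull_edge_def by (auto simp: insert_commute)
  moreover have "0 < cross2 (p$j - p$i) (p$q - p$i)"
    using assms unfolding left_hull_edge_def by auto
  ultimately show False using cross2_diff_swap[of "p$i" "p$j" "p$q"] by linarith
qed

lemma left_hull_edges_exist:
  assumes gp: "general_position p" and "finite Q" "3 \<le> card Q" "convex_position p Q" "i \<in> Q"
  shows "\<exists>a. left_hull_edge p Q i a" and "\<exists>b. left_hull_edge p Q b i"
proof -
  let ?S = "Q - {i}"
  have "p$i \<notin> convex hull ((\<lambda>k. p$k) ` ?S)"
    using assms(4,5) unfolding convex_position_def by blast
  moreover have "closed (convex hull ((\<lambda>k. p$k) ` ?S))"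
    using assms(2) by (simp add: compact_imp_closed compact_convex_hull finite_imp_compact)
  ultimately obtain c \<beta> where "c \<bullet> p$i < \<beta>" "\<forall>x\<in>convex hull ((\<lambda>k. p$k) ` ?S). \<beta> < c \<bullet> x"
    using separating_hyperplane_closed_point[OF convex_convex_hull] by blast
  then have pos: "\<forall>q\<in>?S. 0 < c \<bullet> (p$q - p$i)"
    by (auto simp: inner_diff_right intro!: hull_inc dest!: bspec)
  have "card ?S \<ge> 2" using assms(2,3,5) by simp
  then have "?S \<noteq> {}" by (metis card.empty not_numeral_le_zero)
  have indep: "\<forall>q\<in>?S. \<forall>q'\<in>?S. q \<noteq> q' \<longrightarrow> cross2 (p$q - p$i) (p$q' - p$i) \<noteq> 0"
    using general_position_cross2_neq_0[OF gp, of i] by auto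
  obtain a where "a \<in> ?S" "\<forall>q\<in>?S - {a}. 0 < cross2 (p$a - p$i) (p$q - p$i)"
    using extreme_directions(1)[OF _ \<open>?S \<noteq> {}\<close> pos indep] assms(2) by auto
  then show "\<exists>a. left_hull_edge p Q i a"
    unfolding left_hull_edge_def using assms(5) by (auto simp: Diff_insert2[symmetric] insert_commute)
  obtain b where "b \<in> ?S" "\<forall>q\<in>?S - {b}. cross2 (p$b - p$i) (p$q - p$i) < 0"
    using extreme_directions(2)[OF _ \<open>?S \<noteq> {}\<close> pos indep] assms(2) by auto
  then have "left_hull_edge p Q b i"
    unfolding left_hull_edge_def using assms(5) cross2_diff_swap[of "p$i" "p$b"]
    by (auto simp: Diff_insert2[symmetric] insert_commute)
  then show "\<exists>b. left_hull_edge p Q b i" ..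
qed

lemma left_hull_edge_in_polygon_boundary_edges:
  assumes gp: "general_position p" and "finite Q" and edge: "left_hull_edge p Q i j"
  shows "{i, j} \<in> polygon_boundary_edges p Q"
proof -
  let ?C = "convex hull ((\<lambda>k. p$k) ` Q)"
  have ij: "i \<in> Q" "j \<in> Q" "i \<noteq> j" using edge unfolding left_hull_edge_def by auto
  define c where "c = rot90 (p$j - p$i)"
  have "c \<noteq> 0" using general_position_neq[OF gp ij(3)] by (auto simp: c_def vec2_eq_iff)
  have "c \<bullet> p$i \<le> c \<bullet> p$q" if "q \<in> Q" for q
  proof -
    have "0 \<le> cross2 (p$j - p$i) (p$q - p$i)"
    proof (cases "q \<in> {i, j}")
      case True then show ?thesis by (auto simp: cross2_def)
    next
      case False
      then have "q \<in> Q - {i, j}" using that by simp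
      then show ?thesis using edge unfolding left_hull_edge_def by (blast intro: less_imp_le)
    qed
    then show ?thesis by (simp add: c_def cross2_eq_inner_rot90 inner_diff_right)
  qed
  then have "?C \<subseteq> {x. c \<bullet> p$i \<le> c \<bullet> x}"
    by (intro hull_minimal) (auto simp: convex_halfspace_ge)
  then have interior: "interior ?C \<subseteq> {x. c \<bullet> p$i < c \<bullet> x}"
    using interior_mono interior_halfspace_ge[OF \<open>c \<noteq> 0\<close>] by blast
  have "closed_segment (p$i) (p$j) \<subseteq> ?C"
    using ij by (intro closed_segment_subset_convex_hull) (auto intro: hull_inc)
  moreover have "closure ?C = ?C"
    using assms(2) by (simp add: closure_closed compact_imp_closed compact_convex_hull finite_imp_compact)
  moreover have "z \<notin> interior ?C" if z: "z \<in> closed_segment (p$i) (p$j)" for z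
  proof -
    obtain t where "z = (1 - t) *\<^sub>R p$i + t *\<^sub>R p$j" using z unfolding closed_segment_def by blast
    then have "z - p$i = t *\<^sub>R (p$j - p$i)" by (simp add: algebra_simps)
    then have "c \<bullet> (z - p$i) = 0" by (simp add: c_def)
    then show ?thesis using interior by (auto simp: inner_diff_right)
  qed
  ultimately have "closed_segment (p$i) (p$j) \<subseteq> frontier ?C"
    unfolding frontier_def by auto
  then show ?thesis unfolding polygon_boundary_edges_def using ij by blast
qed

text \<open>Angular velocity of the outgoing minus that of the incoming boundary edge at \<open>p\<^sub>i\<close>
  (see \<open>turning_eq\<close>). Writing it as a difference of two sums over all of \<open>Q\<close> makes the total over
  all vertices cancel without choosing a cyclic order on \<open>Q\<close>.\<close>

definition turning :: "real^2^'n \<Rightarrow> real^2^'n \<Rightarrow> 'n set \<Rightarrow> 'n \<Rightarrow> real" where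
  "turning p v Q i =
     (\<Sum>j\<in>Q. if left_hull_edge p Q i j then rotation_rate p v i j else 0)
   - (\<Sum>j\<in>Q. if left_hull_edge p Q j i then rotation_rate p v j i else 0)"

lemma sum_turning_eq_0: "(\<Sum>i\<in>Q. turning p v Q i) = 0"
proof -
  define F where "F i j = (if left_hull_edge p Q i j then rotation_rate p v i j else 0)" for i j
  have "(\<Sum>i\<in>Q. \<Sum>j\<in>Q. F j i) = (\<Sum>j\<in>Q. \<Sum>i\<in>Q. F j i)" by (rule sum.swap)
  then show ?thesis by (simp add: turning_def F_def[symmetric] sum_subtractf)
qed

lemma turning_eq:
  assumes "left_hull_edge p Q i a" "left_hull_edge p Q b i"
  shows "turning p v Q i = rotation_rate p v i a - rotation_rate p v b i"
proof -
  have "left_hull_edge p Q i j \<longleftrightarrow> j = a" "left_hull_edge p Q j i \<longleftrightarrow> j = b" for j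
    using assms left_hull_edge_unique_succ left_hull_edge_unique_pred by metis+
  moreover have "a \<in> Q" "b \<in> Q" using assms unfolding left_hull_edge_def by auto
  ultimately show ?thesis by (simp add: turning_def)
qed

lemma inner_diff_scaleR_rot90:
  "(x - y) \<bullet> (s *\<^sub>R rot90 x - t *\<^sub>R rot90 y) = (t - s) * cross2 x y"
  by (simp add: inner_vec2 cross2_def algebra_simps)

lemma strain_across_vertex:
  assumes "strain p v i a = 0" "strain p v i b = 0" "p$a \<noteq> p$i" "p$b \<noteq> p$i"
  shows "strain p v a b
    = (rotation_rate p v i b - rotation_rate p v i a) * cross2 (p$a - p$i) (p$b - p$i)"
proof -
  have "strain p v a b = ((p$a - p$i) - (p$b - p$i)) \<bullet> ((v$a - v$i) - (v$b - v$i))"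
    by (simp add: strain_def)
  also have "\<dots> = ((p$a - p$i) - (p$b - p$i)) \<bullet>
      (rotation_rate p v i a *\<^sub>R rot90 (p$a - p$i) - rotation_rate p v i b *\<^sub>R rot90 (p$b - p$i))"
    using assms velocity_diff_if_strain_eq_0 by metis
  finally show ?thesis by (simp only: inner_diff_scaleR_rot90)
qed

lemma left_hull_edge_neighbours_distinct:
  assumes "finite Q" "3 \<le> card Q" "left_hull_edge p Q i a" "left_hull_edge p Q b i"
  shows "a \<noteq> b"
proof
  assume "a = b"
  have "i \<in> Q" "a \<in> Q" "i \<noteq> a" using assms(3) unfolding left_hull_edge_def by auto
  then have "card (Q - {i, a}) \<ge> 1" using assms(1,2) card_Diff_subset[of "{i, a}" Q] by auto
  then obtain q where "q \<in> Q - {i, a}" by (metis all_not_in_conv card.empty not_one_le_zero)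
  then show False using left_hull_edge_not_sym assms(3,4) \<open>a = b\<close> by blast
qed

lemma left_hull_edges_cross2_pos:
  assumes "finite Q" "3 \<le> card Q" and a: "left_hull_edge p Q i a" and b: "left_hull_edge p Q b i"
  shows "0 < cross2 (p$a - p$i) (p$b - p$i)"
proof -
  have "a \<noteq> b" using left_hull_edge_neighbours_distinct assms by blast
  moreover have "i \<noteq> b" "b \<in> Q" using b unfolding left_hull_edge_def by auto
  ultimately show ?thesis using a unfolding left_hull_edge_def by auto
qed

lemma strain_across_vertex_eq_turning:
  assumes gp: "general_position p"
    and a: "left_hull_edge p Q i a" and b: "left_hull_edge p Q b i"
    and "strain p v i a = 0" "strain p v b i = 0"
  shows "strain p v a b = - turning p v Q i * cross2 (p$a - p$i) (p$b - p$i)"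
proof -
  have "i \<noteq> a" "i \<noteq> b" using a b unfolding left_hull_edge_def by auto
  have T: "turning p v Q i = rotation_rate p v i a - rotation_rate p v i b"
    using turning_eq[OF a b] by (simp add: rotation_rate_commute[of p v b i])
  have "strain p v i b = 0" using assms(5) by (simp add: strain_commute[of p v b i])
  moreover have "p$a \<noteq> p$i" "p$b \<noteq> p$i"
    using general_position_neq[OF gp] \<open>i \<noteq> a\<close> \<open>i \<noteq> b\<close> by metis+
  ultimately have S: "strain p v a b
      = (rotation_rate p v i b - rotation_rate p v i a) * cross2 (p$a - p$i) (p$b - p$i)"
    using strain_across_vertex assms(4) by blast
  show ?thesis
    unfolding S T by (simp add: algebra_simps)
qed

lemma polygon_vertex_neighbours_tight:
  assumes gp: "general_position p" and nonneg: "\<forall>i j. 0 \<le> strain p v i j"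
    and Q: "finite Q" "3 \<le> card Q" "convex_position p Q"
    and tight: "\<forall>i j. left_hull_edge p Q i j \<longrightarrow> strain p v i j = 0"
    and a: "left_hull_edge p Q i a" and b: "left_hull_edge p Q b i"
  shows "strain p v a b = 0"
proof -
  have "turning p v Q x \<le> 0" if x: "x \<in> Q" for x
  proof -
    obtain a' b' where a': "left_hull_edge p Q x a'" and b': "left_hull_edge p Q b' x"
      using left_hull_edges_exist[OF gp Q x] by blast
    have "0 \<le> - turning p v Q x * cross2 (p$a' - p$x) (p$b' - p$x)"
      using strain_across_vertex_eq_turning[OF gp a' b'] tight a' b' nonneg by metis
    then show ?thesis
      using left_hull_edges_cross2_pos[OF Q(1,2) a' b'] by (auto simp: mult_le_0_iff)
  qed
  then have "\<forall>x\<in>Q. turning p v Q x = 0"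
    using sum_nonneg_eq_0_iff[OF Q(1), of "\<lambda>x. - turning p v Q x"] sum_turning_eq_0[of p v Q]
    by (simp add: sum_negf)
  moreover have "i \<in> Q" using a unfolding left_hull_edge_def by blast
  ultimately show ?thesis
    using strain_across_vertex_eq_turning[OF gp a b] tight a b by simp
qed

lemma left_hull_edge_remove_vertex:
  assumes gp: "general_position p" and Q: "finite Q" "3 \<le> card Q" "convex_position p Q"
    and a: "left_hull_edge p Q i a" and b: "left_hull_edge p Q b i"
    and new: "left_hull_edge p (Q - {i}) x y" and old: "\<not> left_hull_edge p Q x y"
  shows "x = b \<and> y = a"
proof -
  have xy: "x \<in> Q - {i}" "y \<in> Q - {i}" using new unfolding left_hull_edge_def by auto
  obtain y' where y': "left_hull_edge p Q x y'" using left_hull_edges_exist(1)[OF gp Q] xy by blast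
  obtain x' where x': "left_hull_edge p Q x' y" using left_hull_edges_exist(2)[OF gp Q] xy by blast
  have "y' = i"
  proof (rule ccontr)
    assume "y' \<noteq> i"
    then have "left_hull_edge p (Q - {i}) x y'"
      using y' xy by (intro left_hull_edge_subset[OF y']) (auto simp: left_hull_edge_def)
    then have "y' = y" using new left_hull_edge_unique_succ by blast
    then show False using y' old by blast
  qed
  moreover have "x' = i"
  proof (rule ccontr)
    assume "x' \<noteq> i"
    then have "left_hull_edge p (Q - {i}) x' y"
      using x' xy by (intro left_hull_edge_subset[OF x']) (auto simp: left_hull_edge_def)
    then have "x' = x" using new left_hull_edge_unique_pred by blast
    then show False using x' old by blast
  qed
  ultimately show ?thesis
    using x' y' a b left_hull_edge_unique_succ left_hull_edge_unique_pred by blast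
qed

lemma rigid_attach_vertex:
  assumes gp: "general_position p" and rigid: "\<forall>x\<in>S. \<forall>y\<in>S. strain p v x y = 0"
    and S: "a \<in> S" "b \<in> S" "a \<noteq> b" "i \<notin> S"
    and ai: "strain p v a i = 0" and bi: "strain p v b i = 0"
  shows "\<forall>x\<in>insert i S. \<forall>y\<in>insert i S. strain p v x y = 0"
proof -
  have iq: "strain p v q i = 0" if q: "q \<in> S" for q
  proof (cases "q = a \<or> q = b")
    case True
    then show ?thesis using ai bi by auto
  next
    case False
    let ?\<omega> = "rotation_rate p v a b"
    have "distinct [a, b, q]" "distinct [a, b, i]" using False S q by auto
    then have "v$q = v$a + ?\<omega> *\<^sub>R rot90 (p$q - p$a)" "v$i = v$a + ?\<omega> *\<^sub>R rot90 (p$i - p$a)"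
      using rigid_triangle[of p v a b] rigid S q ai bi general_position_cross2_neq_0[OF gp] by auto
    then show ?thesis by (rule strain_eq_0_if_rigid)
  qed
  show ?thesis
  proof (intro ballI)
    fix x y assume "x \<in> insert i S" "y \<in> insert i S"
    then consider "x = i" "y = i" | "x = i" "y \<in> S" | "x \<in> S" "y = i" | "x \<in> S" "y \<in> S"
      by blast
    then show "strain p v x y = 0"
      by cases (use rigid iq strain_commute[of p v i y] in auto)
  qed
qed

lemma convex_position_rigid:
  assumes gp: "general_position p" and nonneg: "\<forall>i j. 0 \<le> strain p v i j"
  shows "finite Q \<Longrightarrow> 3 \<le> card Q \<Longrightarrow> convex_position p Q
    \<Longrightarrow> \<forall>i j. left_hull_edge p Q i j \<longrightarrow> strain p v i j = 0
    \<Longrightarrow> \<forall>i\<in>Q. \<forall>j\<in>Q. strain p v i j = 0"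
proof (induction "card Q" arbitrary: Q rule: less_induct)
  case less
  note Q = less.prems(1-3) and tight = less.prems(4)
  obtain i where "i \<in> Q" using Q(2) by fastforce
  obtain a b where a: "left_hull_edge p Q i a" and b: "left_hull_edge p Q b i"
    using left_hull_edges_exist[OF gp Q \<open>i \<in> Q\<close>] by blast
  have ab: "strain p v a b = 0" "strain p v b a = 0"
    using polygon_vertex_neighbours_tight[OF gp nonneg Q tight a b]
    by (simp_all add: strain_commute[of p v b a])
  have "a \<noteq> b" using left_hull_edge_neighbours_distinct[OF Q(1,2) a b] .
  have abQ': "a \<in> Q - {i}" "b \<in> Q - {i}" using a b unfolding left_hull_edge_def by auto
  have card': "card (Q - {i}) = card Q - 1" using Q(1) \<open>i \<in> Q\<close> by simp
  have rigid': "\<forall>x\<in>Q - {i}. \<forall>y\<in>Q - {i}. strain p v x y = 0"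
  proof (cases "3 \<le> card (Q - {i})")
    case True
    have "\<forall>x y. left_hull_edge p (Q - {i}) x y \<longrightarrow> strain p v x y = 0"
      using tight ab left_hull_edge_remove_vertex[OF gp Q a b] by blast
    moreover have "convex_position p (Q - {i})" using Q(3) by (rule convex_position_subset) blast
    ultimately show ?thesis
      using less.hyps[of "Q - {i}"] Q(1) True card' \<open>i \<in> Q\<close> by (simp add: card_gt_0_iff)
  next
    case False
    then have "card {a, b} = card (Q - {i})" using card' Q(2) \<open>a \<noteq> b\<close> by simp
    then have "{a, b} = Q - {i}"
      using abQ' Q(1) by (intro card_subset_eq) auto
    then have "Q - {i} = {a, b}" ..
    then show ?thesis using ab by auto
  qed
  have "strain p v a i = 0" "strain p v b i = 0"
    using tight[rule_format, OF a] tight[rule_format, OF b] strain_commute[of p v a i] by auto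
  then have "\<forall>x\<in>insert i (Q - {i}). \<forall>y\<in>insert i (Q - {i}). strain p v x y = 0"
    using rigid_attach_vertex[OF gp rigid' abQ' \<open>a \<noteq> b\<close>] by blast
  then show ?case using \<open>i \<in> Q\<close> by (simp add: insert_absorb)
qed

lemma general_position_line_unique:
  assumes gp: "general_position p" and "w \<noteq> 0"
    and "(p$m - p$q) \<bullet> w = 0" "(p$m - p$q') \<bullet> w = 0" "q \<noteq> m" "q' \<noteq> m"
  shows "q = q'"
proof (rule ccontr)
  assume "q \<noteq> q'"
  then have "cross2 (p$q - p$m) (p$q' - p$m) \<noteq> 0"
    using assms(5,6) by (intro general_position_cross2_neq_0[OF gp]) auto
  moreover have "w \<bullet> (p$q - p$m) = 0" "w \<bullet> (p$q' - p$m) = 0"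
    using assms(3,4) by (simp_all add: inner_commute[of w] inner_diff_left)
  then have "cross2 (p$q - p$m) (p$q' - p$m) = 0"
    using assms(2) by (intro cross2_eq_0_if_orthogonal)
  ultimately show False by simp
qed

lemma convex_hull_index_combination:
  assumes "general_position p" "finite Q" "x \<in> convex hull ((\<lambda>i. p$i) ` Q)"
  obtains \<mu> where "\<forall>q\<in>Q. 0 \<le> \<mu> q" "(\<Sum>q\<in>Q. \<mu> q) = 1" "(\<Sum>q\<in>Q. \<mu> q *\<^sub>R p$q) = x"
proof -
  have inj: "inj_on (\<lambda>i. p$i) Q"
    using general_position_neq[OF assms(1)] by (auto simp: inj_on_def)
  obtain u where "\<forall>y\<in>(\<lambda>i. p$i) ` Q. 0 \<le> u y" "sum u ((\<lambda>i. p$i) ` Q) = 1"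
      "(\<Sum>y\<in>(\<lambda>i. p$i) ` Q. u y *\<^sub>R y) = x"
    using assms(3) convex_hull_finite[OF finite_imageI[OF assms(2)]] by blast
  then show ?thesis
    using that[of "\<lambda>q. u (p$q)"] by (simp add: sum.reindex[OF inj])
qed

lemma general_position_hull_point_on_supporting_line:
  assumes gp: "general_position p" and "finite Q" and "w \<noteq> 0"
    and side: "\<forall>q\<in>Q. 0 \<le> (p$m - p$q) \<bullet> w" and m: "p$m \<in> convex hull ((\<lambda>i. p$i) ` Q)"
  shows "m \<in> Q"
proof (rule ccontr)
  assume "m \<notin> Q"
  obtain \<mu> where \<mu>: "\<forall>q\<in>Q. 0 \<le> \<mu> q" "(\<Sum>q\<in>Q. \<mu> q) = 1" "(\<Sum>q\<in>Q. \<mu> q *\<^sub>R p$q) = p$m"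
    using convex_hull_index_combination[OF gp assms(2) m] by blast
  have "(\<Sum>q\<in>Q. \<mu> q * ((p$m - p$q) \<bullet> w)) = (\<Sum>q\<in>Q. \<mu> q * (p$m \<bullet> w) - (\<mu> q *\<^sub>R p$q) \<bullet> w)"
    by (simp add: inner_diff_left right_diff_distrib)
  also have "\<dots> = (\<Sum>q\<in>Q. \<mu> q) * (p$m \<bullet> w) - (\<Sum>q\<in>Q. \<mu> q *\<^sub>R p$q) \<bullet> w"
    by (simp only: sum_subtractf sum_distrib_right inner_sum_left)
  finally have "(\<Sum>q\<in>Q. \<mu> q * ((p$m - p$q) \<bullet> w)) = 0" using \<mu>(2,3) by simp
  moreover have "\<forall>q\<in>Q. 0 \<le> \<mu> q * ((p$m - p$q) \<bullet> w)" using \<mu>(1) side by simp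
  ultimately have zero: "\<forall>q\<in>Q. \<mu> q * ((p$m - p$q) \<bullet> w) = 0"
    using sum_nonneg_eq_0_iff[OF assms(2), of "\<lambda>q. \<mu> q * ((p$m - p$q) \<bullet> w)"] by blast
  have "\<exists>q1\<in>Q. \<mu> q1 \<noteq> 0"
  proof (rule ccontr)
    assume "\<not> ?thesis"
    then have "(\<Sum>q\<in>Q. \<mu> q) = 0" by simp
    then show False using \<mu>(2) by simp
  qed
  then obtain q1 where q1: "q1 \<in> Q" "\<mu> q1 \<noteq> 0" by blast
  have single: "\<mu> q = 0" if q: "q \<in> Q" "q \<noteq> q1" for q
  proof (rule ccontr)
    assume "\<mu> q \<noteq> 0"
    then have "(p$m - p$q) \<bullet> w = 0" "(p$m - p$q1) \<bullet> w = 0"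
      using zero q(1) q1 by auto
    moreover have "q \<noteq> m" "q1 \<noteq> m" using q(1) q1(1) \<open>m \<notin> Q\<close> by auto
    ultimately have "q = q1" by (rule general_position_line_unique[OF gp \<open>w \<noteq> 0\<close>])
    then show False using q(2) by simp
  qed
  have "(\<Sum>q\<in>Q. \<mu> q) = \<mu> q1" "(\<Sum>q\<in>Q. \<mu> q *\<^sub>R p$q) = \<mu> q1 *\<^sub>R p$q1"
    using single q1(1) assms(2) by (simp_all add: sum.remove)
  then have "p$m = p$q1" using \<mu>(2,3) by simp
  moreover have "m \<noteq> q1" using q1(1) \<open>m \<notin> Q\<close> by auto
  ultimately show False using general_position_neq[OF gp] by blast
qed

lemma hull_point_moves_rigidly:
  assumes gp: "general_position p" and nonneg: "\<forall>i j. 0 \<le> strain p v i j" and "finite Q"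
    and rigid: "\<forall>q\<in>Q. v$q = c + \<omega> *\<^sub>R rot90 (p$q - x)"
    and m: "p$m \<in> convex hull ((\<lambda>i. p$i) ` Q)"
  shows "v$m = c + \<omega> *\<^sub>R rot90 (p$m - x)"
proof (rule ccontr)
  assume moves: "v$m \<noteq> c + \<omega> *\<^sub>R rot90 (p$m - x)"
  define w where "w = v$m - (c + \<omega> *\<^sub>R rot90 (p$m - x))"
  have "w \<noteq> 0" "m \<notin> Q" using moves rigid by (auto simp: w_def)
  have "strain p v m q = (p$m - p$q) \<bullet> w" if "q \<in> Q" for q
  proof -
    have "v$m - v$q = w + \<omega> *\<^sub>R rot90 (p$m - p$q)"
      using rigid that by (simp add: w_def rot90_diff algebra_simps)
    then show ?thesis by (simp add: strain_def inner_add_right)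
  qed
  then have "\<forall>q\<in>Q. 0 \<le> (p$m - p$q) \<bullet> w" using nonneg by metis
  then have "m \<in> Q"
    using general_position_hull_point_on_supporting_line[OF gp assms(3) \<open>w \<noteq> 0\<close> _ m] by blast
  then show False using \<open>m \<notin> Q\<close> by blast
qed

lemma convex_polygon_rigid:
  assumes gp: "general_position p" and nonneg: "\<forall>i j. 0 \<le> strain p v i j"
    and polygon: "convex_polygon p Q" and boundary: "polygon_boundary_edges p Q \<subseteq> tight_edges p v"
  shows "\<forall>m\<in>{m. p$m \<in> convex hull ((\<lambda>i. p$i) ` Q)}. \<forall>m'\<in>{m. p$m \<in> convex hull ((\<lambda>i. p$i) ` Q)}.
           strain p v m m' = 0"
proof -
  have "finite Q" by simp
  have "3 \<le> card Q" using polygon by (simp add: convex_polygon_def)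
  have "\<forall>i j. left_hull_edge p Q i j \<longrightarrow> strain p v i j = 0"
    using left_hull_edge_in_polygon_boundary_edges[OF gp \<open>finite Q\<close>] boundary mem_tight_edges_iff
    by blast
  then have rigid: "\<forall>i\<in>Q. \<forall>j\<in>Q. strain p v i j = 0"
    using convex_position_rigid[OF gp nonneg \<open>finite Q\<close> \<open>3 \<le> card Q\<close>]
      convex_polygon_convex_position[OF gp polygon] by blast
  have "\<not> (\<forall>x\<in>Q. \<forall>y\<in>Q. x = y)"
    using \<open>3 \<le> card Q\<close> card_le_Suc0_iff_eq[OF \<open>finite Q\<close>] by auto
  then obtain a b where ab: "a \<in> Q" "b \<in> Q" "a \<noteq> b" by blast
  let ?\<omega> = "rotation_rate p v a b"
  have "v$q = v$a + ?\<omega> *\<^sub>R rot90 (p$q - p$a)" if "q \<in> Q" for q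
  proof (cases "q = a \<or> q = b")
    case True
    then show ?thesis
      using velocity_diff_if_strain_eq_0[of p v a b] rigid ab general_position_neq[OF gp]
      by (auto simp: algebra_simps)
  next
    case False
    then have "distinct [a, b, q]" using ab by auto
    then show ?thesis
      using rigid_triangle general_position_cross2_neq_0[OF gp] rigid ab that by blast
  qed
  then have "v$m = v$a + ?\<omega> *\<^sub>R rot90 (p$m - p$a)" if "p$m \<in> convex hull ((\<lambda>i. p$i) ` Q)" for m
    using hull_point_moves_rigidly[OF gp nonneg \<open>finite Q\<close>] that by blast
  then show ?thesis by (blast intro: strain_eq_0_if_rigid)
qed

theorem lemma3p2:
  fixes p :: "real^2^'n" and i1 i2 :: 'n
  assumes "CARD('n) \<ge> 3"
    and "general_position p"
    and "i1 \<noteq> i2" and "(p$i1)$2 \<noteq> (p$i2)$2"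
  shows "(polyhedron (expansion_cone p i1 i2) \<and> cone (expansion_cone p i1 i2) \<and>
          0 extreme_point_of (expansion_cone p i1 i2) \<and>
          aff_dim (expansion_cone p i1 i2) = 2 * int CARD('n) - 3)
       \<and> (\<forall>v \<in> expansion_cone p i1 i2.
           (\<forall>a b c d. distinct [a,b,c,d] \<and> {a,b} \<in> tight_edges p v \<and> {c,d} \<in> tight_edges p v \<and>
               closed_segment (p$a) (p$b) \<inter> closed_segment (p$c) (p$d) \<noteq> {}
             \<longrightarrow> complete_edges {a,b,c,d} \<subseteq> tight_edges p v)
         \<and> (\<forall>k J. consecutive_angles_le_pi p k J \<and> (\<forall>j\<in>J. {k,j} \<in> tight_edges p v)
             \<longrightarrow> complete_edges (insert k J) \<subseteq> tight_edges p v)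
         \<and> (\<forall>Q. convex_polygon p Q \<and> polygon_boundary_edges p Q \<subseteq> tight_edges p v
             \<longrightarrow> complete_edges {m. p$m \<in> convex hull ((\<lambda>i. p$i) ` Q)} \<subseteq> tight_edges p v))"
proof (intro conjI ballI allI impI)
  show "polyhedron (expansion_cone p i1 i2)" "cone (expansion_cone p i1 i2)"
    by (rule polyhedron_expansion_cone cone_expansion_cone)+
  show "0 extreme_point_of (expansion_cone p i1 i2)"
    using zero_extreme_point_of_expansion_cone assms(2-4) .
  show "aff_dim (expansion_cone p i1 i2) = 2 * int CARD('n) - 3"
    using aff_dim_expansion_cone assms(2-4,1) .
next
  fix v assume "v \<in> expansion_cone p i1 i2"
  then have nonneg: "\<forall>i j. 0 \<le> strain p v i j" by (blast intro: expansion_cone_strain_nonneg)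
  show "complete_edges {a,b,c,d} \<subseteq> tight_edges p v"
    if "distinct [a,b,c,d] \<and> {a,b} \<in> tight_edges p v \<and> {c,d} \<in> tight_edges p v \<and>
      closed_segment (p$a) (p$b) \<inter> closed_segment (p$c) (p$d) \<noteq> {}" for a b c d
    using that by (intro complete_edges_subset_tight_edges crossing_edges_rigid[OF assms(2) nonneg])
      (simp_all add: mem_tight_edges_iff)
  show "complete_edges (insert k J) \<subseteq> tight_edges p v"
    if "consecutive_angles_le_pi p k J \<and> (\<forall>j\<in>J. {k,j} \<in> tight_edges p v)" for k J
    using that by (intro complete_edges_subset_tight_edges star_rigid[OF assms(2) nonneg])
      (simp_all add: mem_tight_edges_iff)
  show "complete_edges {m. p$m \<in> convex hull ((\<lambda>i. p$i) ` Q)} \<subseteq> tight_edges p v"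
    if "convex_polygon p Q \<and> polygon_boundary_edges p Q \<subseteq> tight_edges p v" for Q
    using that by (intro complete_edges_subset_tight_edges convex_polygon_rigid[OF assms(2) nonneg]) auto
qed

end
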